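(* Let $p>2$ be a prime and $k$ any field of characteristic $p$. Then $R_1^{(p)}\neq R_2^{(p)}$.
   Context: Let $X=\{x_1,x_2,\ldots\}$ be a countably infinite set and let $k_0\langle X\rangle$ denote the free associative $k$-algebra (without identity) on $X$. A $T$-space of $k_0\langle X\rangle$ is a $k$-linear subspace closed under every algebra endomorphism of $k_0\langle X\rangle$; the $T$-space generated by a subset is the smallest $T$-space containing it. For $v_1,\ldots,v_d\in k_0\langle X\rangle$, let $S_d(v_1,\ldots,v_d)=\sum_{\sigma\in\Sigma_d}\prod_{i=1}^d v_{\sigma(i)}$, where $\Sigma_d$ is the symmetric group on $d$ letters. Let $R_1^{(d)}$ be the $T$-space generated by $S_d(x_1,\ldots,x_d)$, and let $R_2^{(d)}$ be the $T$-space generated by $R_1^{(d)}$ together with all products $u\,S_d(v_1,\ldots,v_d)$ with $u\in R_1^{(d)}$, $v_i\in k_0\langle X\rangle$. *)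

theory Defs
  imports "HOL-Computational_Algebra.Primes" "HOL-Library.Poly_Mapping" "HOL-Combinatorics.Permutations"
begin

text \<open>The free associative algebra k<X> on X = {x_0, x_1, ...} (indexed by nat) is modelled
as finitely supported functions from words (nat list) to k. The free algebra without
identity k_0<X> is the subset FA of elements supported on nonempty words.\<close>

type_synonym 'k fa = "nat list \<Rightarrow>\<^sub>0 'k"

definition FA :: "'k::field fa set" where
  "FA = {f. \<forall>w\<in>Poly_Mapping.keys f. w \<noteq> []}"

definition fvar :: "nat \<Rightarrow> 'k::field fa" where
  "fvar i = Poly_Mapping.single [i] 1"

definition fsmul :: "'k::field \<Rightarrow> 'k fa \<Rightarrow> 'k fa" where
  "fsmul c f = Poly_Mapping.map (\<lambda>a. c * a) f"

definition fmul :: "'k::field fa \<Rightarrow> 'k fa \<Rightarrow> 'k fa" where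
  "fmul f g = (\<Sum>u\<in>Poly_Mapping.keys f. \<Sum>v\<in>Poly_Mapping.keys g. Poly_Mapping.single (u @ v) (Poly_Mapping.lookup f u * Poly_Mapping.lookup g v))"

text \<open>Ordered product of a list of elements (empty product = the unit word, only used
for nonempty lists below).\<close>
fun flistprod :: "'k::field fa list \<Rightarrow> 'k fa" where
  "flistprod [] = Poly_Mapping.single [] 1"
| "flistprod (f # fs) = fmul f (flistprod fs)"

definition fsubst :: "(nat \<Rightarrow> 'k::field fa) \<Rightarrow> 'k fa \<Rightarrow> 'k fa" where
  "fsubst phi f = (\<Sum>w\<in>Poly_Mapping.keys f. fsmul (Poly_Mapping.lookup f w) (flistprod (map phi w)))"

definition is_Tspace :: "'k::field fa set \<Rightarrow> bool" where
  "is_Tspace V \<longleftrightarrow> V \<subseteq> FA \<and> 0 \<in> V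
     \<and> (\<forall>f\<in>V. \<forall>g\<in>V. f + g \<in> V)
     \<and> (\<forall>c. \<forall>f\<in>V. fsmul c f \<in> V)
     \<and> (\<forall>phi. (\<forall>i. phi i \<in> FA) \<longrightarrow> (\<forall>f\<in>V. fsubst phi f \<in> V))"

definition Tspan :: "'k::field fa set \<Rightarrow> 'k fa set" where
  "Tspan S = \<Inter>{V. is_Tspace V \<and> S \<subseteq> V}"

text \<open>S_d(v_1,...,v_d) = sum over sigma in Sigma_d of v_sigma(1) ... v_sigma(d)
(indices shifted to 0..d-1).\<close>
definition Ssym :: "nat \<Rightarrow> (nat \<Rightarrow> 'k::field fa) \<Rightarrow> 'k fa" where
  "Ssym d v = (\<Sum>\<sigma>\<in>{\<sigma>. \<sigma> permutes {..<d}}. flistprod (map (\<lambda>i. v (\<sigma> i)) [0..<d]))"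

definition R1 :: "nat \<Rightarrow> 'k::field fa set" where
  "R1 d = Tspan {Ssym d fvar}"

definition R2 :: "nat \<Rightarrow> 'k::field fa set" where
  "R2 d = Tspan (R1 d \<union> {fmul u (Ssym d v) | u v. u \<in> R1 d \<and> (\<forall>i<d. v i \<in> FA)})"

end

theory Submission
  imports Defs
begin

text \<open>Call a function c on words cyclic if c (u @ v) = c (v @ u), and pair it linearly with
  elements of the free algebra. Pulling a cyclic c back along a substitution gives again a cyclic
  function, so the elements annihilated by all cyclic functions form a T-space. It contains
  S_p(x_0, ..., x_{p-1}) when p vanishes in k: rotating positions acts freely on its p! monomials,
  the pairing is constant on the orbits, and every orbit has p elements. Hence R_1 lies in this
  T-space. The element S_p(x_0, ..., x_{p-1}) S_p(x_p, ..., x_{2p-1}) of R_2 does not: the indicator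
  of the rotations of the word x_0 x_1 ... x_{2p-1} pairs with it to 1, since exactly one of its
  monomials is such a rotation.\<close>

lemma fmul_eq_sum:
  fixes f g :: "'k::field fa"
  assumes "finite A" "Poly_Mapping.keys f \<subseteq> A" "finite B" "Poly_Mapping.keys g \<subseteq> B"
  shows "fmul f g = (\<Sum>u\<in>A. \<Sum>v\<in>B.
    Poly_Mapping.single (u @ v) (Poly_Mapping.lookup f u * Poly_Mapping.lookup g v))"
proof -
  have "fmul f g = (\<Sum>u\<in>A. \<Sum>v\<in>Poly_Mapping.keys g.
    Poly_Mapping.single (u @ v) (Poly_Mapping.lookup f u * Poly_Mapping.lookup g v))"
    unfolding fmul_def
    by (rule sum.mono_neutral_left) (use assms in \<open>auto simp: in_keys_iff\<close>)
  then show ?thesis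
    by (simp, intro sum.cong[OF refl] sum.mono_neutral_left) (use assms in \<open>auto simp: in_keys_iff\<close>)
qed

lemma fmul_add_left: "fmul (f + g) h = fmul f h + fmul g (h :: 'k::field fa)"
proof -
  let ?A = "Poly_Mapping.keys f \<union> Poly_Mapping.keys g" and ?B = "Poly_Mapping.keys h"
  have keys: "Poly_Mapping.keys (f + g) \<subseteq> ?A"
    by (rule keys_add)
  show ?thesis
    by (simp add: fmul_eq_sum[where A = ?A and B = ?B] keys lookup_add distrib_right
        single_add sum.distrib)
qed

lemma fmul_add_right: "fmul h (f + g) = fmul h f + fmul h (g :: 'k::field fa)"
proof -
  let ?A = "Poly_Mapping.keys h" and ?B = "Poly_Mapping.keys f \<union> Poly_Mapping.keys g"
  have keys: "Poly_Mapping.keys (f + g) \<subseteq> ?B"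
    by (rule keys_add)
  show ?thesis
    by (simp add: fmul_eq_sum[where A = ?A and B = ?B] keys lookup_add distrib_left
        single_add sum.distrib)
qed

lemma fmul_zero_left [simp]: "fmul 0 h = (0 :: 'k::field fa)"
  by (simp add: fmul_def)

lemma fmul_zero_right [simp]: "fmul h 0 = (0 :: 'k::field fa)"
  by (simp add: fmul_def)

lemma fmul_single:
  "fmul (Poly_Mapping.single u a) (Poly_Mapping.single v b)
     = (Poly_Mapping.single (u @ v) (a * b) :: 'k::field fa)"
  by (subst fmul_eq_sum[where A = "{u}" and B = "{v}"]) auto

lemma fmul_sum_left:
  "finite I \<Longrightarrow> fmul (\<Sum>i\<in>I. F i) h = (\<Sum>i\<in>I. fmul (F i) (h :: 'k::field fa))"
  by (induction I rule: finite_induct) (auto simp: fmul_add_left)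

lemma fmul_sum_right:
  "finite I \<Longrightarrow> fmul h (\<Sum>i\<in>I. F i) = (\<Sum>i\<in>I. fmul h (F i :: 'k::field fa))"
  by (induction I rule: finite_induct) (auto simp: fmul_add_right)

lemma poly_mapping_sum_single:
  "(\<Sum>u\<in>Poly_Mapping.keys f. Poly_Mapping.single u (Poly_Mapping.lookup f u)) = f"
  by (rule poly_mapping_eqI) (auto simp: lookup_sum lookup_single when_def in_keys_iff)

lemma fmul_assoc: "fmul (fmul f g) h = fmul f (fmul g (h :: 'k::field fa))"
proof -
  let ?e = "\<lambda>f :: 'k fa. \<Sum>u\<in>Poly_Mapping.keys f. Poly_Mapping.single u (Poly_Mapping.lookup f u)"
  have "fmul (fmul f g) h = fmul (fmul (?e f) (?e g)) (?e h)"
    by (simp only: poly_mapping_sum_single)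
  also have "\<dots> = fmul (?e f) (fmul (?e g) (?e h))"
    by (simp add: fmul_sum_left fmul_sum_right fmul_single mult.assoc sum.swap[where A = "Poly_Mapping.keys h"])
  also have "\<dots> = fmul f (fmul g h)"
    by (simp only: poly_mapping_sum_single)
  finally show ?thesis .
qed

lemma fmul_unit_left: "fmul (Poly_Mapping.single [] 1) (g :: 'k::field fa) = g"
  by (subst (1 2) poly_mapping_sum_single[symmetric]) (simp add: fmul_sum_right fmul_single)

lemma flistprod_append:
  "flistprod (xs @ ys) = fmul (flistprod xs) (flistprod (ys :: 'k::field fa list))"
  by (induction xs) (auto simp: fmul_unit_left fmul_assoc)

lemma flistprod_map_fvar: "flistprod (map fvar w) = (Poly_Mapping.single w 1 :: 'k::field fa)"
  by (induction w) (auto simp: fvar_def fmul_single)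

section \<open>Cyclic functionals on words\<close>

definition cyclic_word_fun :: "('a list \<Rightarrow> 'k) \<Rightarrow> bool" where
  "cyclic_word_fun c \<longleftrightarrow> (\<forall>u v. c (u @ v) = c (v @ u))"

definition word_pairing :: "(nat list \<Rightarrow> 'k::field) \<Rightarrow> 'k fa \<Rightarrow> 'k" where
  "word_pairing c f = (\<Sum>w\<in>Poly_Mapping.keys f. Poly_Mapping.lookup f w * c w)"

lemma word_pairing_eq_sum:
  "finite A \<Longrightarrow> Poly_Mapping.keys f \<subseteq> A \<Longrightarrow>
    word_pairing c f = (\<Sum>w\<in>A. Poly_Mapping.lookup f w * c w)"
  unfolding word_pairing_def by (rule sum.mono_neutral_left) (auto simp: in_keys_iff)

lemma word_pairing_add: "word_pairing c (f + g) = word_pairing c f + word_pairing c g"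
proof -
  let ?A = "Poly_Mapping.keys f \<union> Poly_Mapping.keys g"
  have keys: "Poly_Mapping.keys (f + g) \<subseteq> ?A"
    by (rule keys_add)
  show ?thesis
    by (simp add: word_pairing_eq_sum[where A = ?A] keys lookup_add distrib_right sum.distrib)
qed

lemma word_pairing_zero [simp]: "word_pairing c 0 = 0"
  by (simp add: word_pairing_def)

lemma word_pairing_single [simp]: "word_pairing c (Poly_Mapping.single w a) = a * c w"
  by (subst word_pairing_eq_sum[where A = "{w}"]) auto

lemma word_pairing_sum:
  "finite I \<Longrightarrow> word_pairing c (\<Sum>i\<in>I. F i) = (\<Sum>i\<in>I. word_pairing c (F i))"
  by (induction I rule: finite_induct) (auto simp: word_pairing_add)

lemma lookup_fsmul [simp]: "Poly_Mapping.lookup (fsmul a f) w = a * Poly_Mapping.lookup f w"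
  by (simp add: fsmul_def map.rep_eq when_def)

lemma keys_fsmul: "Poly_Mapping.keys (fsmul a f) \<subseteq> Poly_Mapping.keys f"
  by (auto simp: in_keys_iff)

lemma word_pairing_fsmul: "word_pairing c (fsmul a f) = a * word_pairing c f"
  by (subst (1 2) word_pairing_eq_sum[where A = "Poly_Mapping.keys f"])
    (auto simp: keys_fsmul sum_distrib_left mult.assoc)

lemma word_pairing_fmul_commute:
  assumes "cyclic_word_fun c"
  shows "word_pairing c (fmul f g) = word_pairing c (fmul g f)"
proof -
  have expand: "word_pairing c (fmul f g) = (\<Sum>u\<in>Poly_Mapping.keys f. \<Sum>v\<in>Poly_Mapping.keys g.
      Poly_Mapping.lookup f u * Poly_Mapping.lookup g v * c (u @ v))" for f g
    by (simp add: fmul_def word_pairing_sum)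
  show ?thesis
    using assms unfolding expand cyclic_word_fun_def
    by (subst sum.swap) (simp add: mult.commute)
qed

text \<open>Cyclicity survives pulling a functional back along a substitution because the image
  of a word is the ordered product of the images of its letters.\<close>

lemma word_pairing_fsubst:
  "word_pairing c (fsubst phi f) = word_pairing (\<lambda>w. word_pairing c (flistprod (map phi w))) f"
  by (simp add: fsubst_def word_pairing_sum word_pairing_fsmul word_pairing_def[of _ f])

lemma cyclic_word_fun_pullback:
  "cyclic_word_fun c \<Longrightarrow> cyclic_word_fun (\<lambda>w. word_pairing c (flistprod (map phi w)))"
  by (simp add: cyclic_word_fun_def flistprod_append word_pairing_fmul_commute)

lemma cyclic_word_fun_rotate: "cyclic_word_fun c \<Longrightarrow> c (rotate j w) = c w"
  by (metis append_take_drop_id cyclic_word_fun_def rotate_drop_take)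

lemma keys_fmul:
  "Poly_Mapping.keys (fmul f g) \<subseteq> {u @ v | u v. u \<in> Poly_Mapping.keys f \<and> v \<in> Poly_Mapping.keys g}"
  unfolding fmul_def
  by (rule order.trans[OF keys_sum]) (fastforce dest!: set_mp[OF keys_sum] split: if_splits)

lemma FA_zero: "0 \<in> FA"
  by (simp add: FA_def)

lemma FA_single: "w \<noteq> [] \<Longrightarrow> Poly_Mapping.single w a \<in> FA"
  by (simp add: FA_def)

lemma FA_add: "f \<in> FA \<Longrightarrow> g \<in> FA \<Longrightarrow> f + g \<in> FA"
  by (auto simp: FA_def dest: set_mp[OF keys_add])

lemma FA_fsmul: "f \<in> FA \<Longrightarrow> fsmul a f \<in> FA"
  by (auto simp: FA_def dest: set_mp[OF keys_fsmul])

lemma FA_sum: "(\<And>i. i \<in> I \<Longrightarrow> F i \<in> FA) \<Longrightarrow> sum F I \<in> FA"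
  by (auto simp: FA_def dest!: set_mp[OF keys_sum])

lemma FA_fmul: "f \<in> FA \<Longrightarrow> fmul f g \<in> FA"
  by (auto simp: FA_def dest!: set_mp[OF keys_fmul])

lemma FA_flistprod: "xs \<noteq> [] \<Longrightarrow> set xs \<subseteq> FA \<Longrightarrow> flistprod xs \<in> FA"
  by (cases xs) (auto intro: FA_fmul)

lemma FA_fsubst: "f \<in> FA \<Longrightarrow> (\<And>i. phi i \<in> FA) \<Longrightarrow> fsubst phi f \<in> FA"
  unfolding fsubst_def by (intro FA_sum FA_fsmul FA_flistprod) (auto simp: FA_def)

definition cyclic_kernel :: "'k::field fa set" where
  "cyclic_kernel = {f \<in> FA. \<forall>c. cyclic_word_fun c \<longrightarrow> word_pairing c f = 0}"

lemma is_Tspace_cyclic_kernel: "is_Tspace cyclic_kernel"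
  unfolding is_Tspace_def
proof (intro conjI ballI allI impI)
  fix phi :: "nat \<Rightarrow> 'k::field fa" and f :: "'k fa"
  assume phi: "\<forall>i. phi i \<in> FA" and f: "f \<in> cyclic_kernel"
  show "fsubst phi f \<in> cyclic_kernel"
    using f phi
    by (auto simp: cyclic_kernel_def word_pairing_fsubst cyclic_word_fun_pullback intro: FA_fsubst)
qed (auto simp: cyclic_kernel_def word_pairing_add word_pairing_fsmul FA_zero FA_add FA_fsmul)

lemma subset_Tspan: "S \<subseteq> Tspan S"
  by (auto simp: Tspan_def)

lemma Tspan_subset_cyclic_kernel: "S \<subseteq> cyclic_kernel \<Longrightarrow> Tspan S \<subseteq> cyclic_kernel"
  using is_Tspace_cyclic_kernel by (auto simp: Tspan_def)

section \<open>Symmetric sums in characteristic \<open>p\<close> lie in the cyclic kernel\<close>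

definition rot :: "nat \<Rightarrow> nat \<Rightarrow> nat \<Rightarrow> nat" where
  "rot p j i = (if i < p then (i + j) mod p else i)"

lemma rot_comp: "rot p a \<circ> rot p b = rot p (b + a)"
  by (auto simp: rot_def fun_eq_iff) (metis add.assoc mod_add_left_eq)

lemma rot_mod: "rot p (j mod p) = rot p j"
  by (auto simp: rot_def fun_eq_iff mod_add_right_eq)

lemma rot_eq_id: "p dvd j \<Longrightarrow> rot p j = id"
  by (auto simp: rot_def fun_eq_iff)

lemma rot_inverse:
  assumes "j < p"
  shows "rot p j \<circ> rot p ((p - j) mod p) = id" and "rot p ((p - j) mod p) \<circ> rot p j = id"
proof -
  have "p dvd (p - j) mod p + j"
    using assms by (cases "j = 0") auto
  then show "rot p j \<circ> rot p ((p - j) mod p) = id" and "rot p ((p - j) mod p) \<circ> rot p j = id"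
    using assms by (simp_all add: rot_comp rot_eq_id add.commute)
qed

lemma rot_permutes: "0 < p \<Longrightarrow> rot p j permutes {..<p}"
proof -
  assume "0 < p"
  then have inv: "rot p (j mod p) \<circ> rot p ((p - j mod p) mod p) = id"
    "rot p ((p - j mod p) mod p) \<circ> rot p (j mod p) = id"
    by (simp_all add: rot_inverse)
  have "bij_betw (rot p j) {..<p} {..<p}"
    by (rule bij_betw_byWitness[where f' = "rot p ((p - j mod p) mod p)"])
      (use inv in \<open>auto simp: rot_mod fun_eq_iff\<close>, auto simp: rot_def)
  then show ?thesis
    by (rule bij_imp_permutes) (simp add: rot_def)
qed

lemma map_rot_upt: "0 < p \<Longrightarrow> map (\<sigma> \<circ> rot p j) [0..<p] = rotate j (map \<sigma> [0..<p])"
  by (rule nth_equalityI) (auto simp: nth_rotate rot_def add.commute)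

text \<open>Precomposition with the rotations \<open>rot p j\<close> is a free action of \<open>\<int>/p\<close> on the
  permutations of \<open>{..<p}\<close>; the permutations fixing \<open>0\<close> form a system of orbit representatives.\<close>

lemma permutations_rot_decomposition:
  assumes "0 < p"
  shows "bij_betw (\<lambda>(j, \<tau>). \<tau> \<circ> rot p j)
    ({..<p} \<times> {\<tau>. \<tau> permutes {..<p} \<and> \<tau> 0 = 0}) {\<sigma>. \<sigma> permutes {..<p}}"
proof -
  have inv_lt: "inv \<sigma> 0 < p" if "\<sigma> permutes {..<p}" for \<sigma>
    using permutes_in_image[OF permutes_inv[OF that]] assms by auto
  have left_inverse:
    "((p - inv (\<tau> \<circ> rot p j) 0) mod p, \<tau> \<circ> rot p j \<circ> rot p (inv (\<tau> \<circ> rot p j) 0)) = (j, \<tau>)"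
    if j: "j < p" and \<tau>: "\<tau> permutes {..<p}" "\<tau> 0 = 0" for j \<tau>
  proof -
    have "(\<tau> \<circ> rot p j) ((p - j) mod p) = 0"
      using j \<tau>(2) by (cases "j = 0") (auto simp: rot_def)
    then have "inv (\<tau> \<circ> rot p j) 0 = (p - j) mod p"
      using permutes_inv_eq[OF permutes_compose[OF rot_permutes[OF assms] \<tau>(1)]] by blast
    moreover have "(p - (p - j) mod p) mod p = j"
      using j by (cases "j = 0") auto
    ultimately show ?thesis
      using rot_inverse(1)[OF j] by (simp add: o_assoc[symmetric])
  qed
  show ?thesis
    by (rule bij_betw_byWitness[where f' = "\<lambda>\<sigma>. ((p - inv \<sigma> 0) mod p, \<sigma> \<circ> rot p (inv \<sigma> 0))"])
      (use assms inv_lt left_inverse rot_inverse(1) permutes_inverses(1) in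
        \<open>auto simp: o_assoc[symmetric] rot_def intro: permutes_compose[OF rot_permutes[OF assms]]\<close>)
qed

lemma sum_permutations_cyclic_eq_zero:
  fixes c :: "nat list \<Rightarrow> 'k::field"
  assumes p: "0 < p" and char: "of_nat p = (0::'k)" and c: "cyclic_word_fun c"
  shows "(\<Sum>\<sigma> | \<sigma> permutes {..<p}. c (map \<sigma> [0..<p])) = 0"
proof -
  let ?D0 = "{\<tau>. \<tau> permutes {..<p} \<and> \<tau> 0 = 0}"
  have "(\<Sum>\<sigma> | \<sigma> permutes {..<p}. c (map \<sigma> [0..<p]))
      = (\<Sum>(j, \<tau>)\<in>{..<p} \<times> ?D0. c (map (\<tau> \<circ> rot p j) [0..<p]))"
    using sum.reindex_bij_betw[OF permutations_rot_decomposition[OF p], of "\<lambda>\<sigma>. c (map \<sigma> [0..<p])"]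
    by (simp add: case_prod_unfold)
  also have "\<dots> = (\<Sum>(j, \<tau>)\<in>{..<p} \<times> ?D0. c (map \<tau> [0..<p]))"
    by (simp add: map_rot_upt[OF p] cyclic_word_fun_rotate[OF c] case_prod_unfold)
  also have "\<dots> = of_nat p * (\<Sum>\<tau>\<in>?D0. c (map \<tau> [0..<p]))"
    by (simp add: sum.cartesian_product[symmetric])
  finally show ?thesis
    by (simp add: char)
qed

lemma Ssym_fvar_shift:
  "Ssym d (\<lambda>i. fvar (m + i))
     = (\<Sum>\<sigma> | \<sigma> permutes {..<d}. Poly_Mapping.single (map (\<lambda>i. m + \<sigma> i) [0..<d]) (1::'k::field))"
proof -
  have "flistprod (map (\<lambda>i. fvar (m + \<sigma> i)) [0..<d])
      = (Poly_Mapping.single (map (\<lambda>i. m + \<sigma> i) [0..<d]) 1 :: 'k fa)" for \<sigma>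
    using flistprod_map_fvar[of "map (\<lambda>i. m + \<sigma> i) [0..<d]"] by (simp add: o_def)
  then show ?thesis
    by (simp add: Ssym_def)
qed

lemma Ssym_fvar:
  "Ssym d fvar = (\<Sum>\<sigma> | \<sigma> permutes {..<d}. Poly_Mapping.single (map \<sigma> [0..<d]) (1::'k::field))"
  using Ssym_fvar_shift[of d 0] by simp

lemma Ssym_fvar_in_cyclic_kernel:
  assumes "0 < p" and "of_nat p = (0::'k::field)"
  shows "(Ssym p fvar :: 'k fa) \<in> cyclic_kernel"
  unfolding cyclic_kernel_def Ssym_fvar using assms
  by (auto simp: word_pairing_sum finite_permutations sum_permutations_cyclic_eq_zero
      intro!: FA_sum FA_single)

lemma R1_subset_cyclic_kernel:
  "0 < p \<Longrightarrow> of_nat p = (0::'k::field) \<Longrightarrow> (R1 p :: 'k fa set) \<subseteq> cyclic_kernel"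
  unfolding R1_def by (simp add: Tspan_subset_cyclic_kernel Ssym_fvar_in_cyclic_kernel)

section \<open>A product of two symmetric sums outside the cyclic kernel\<close>

definition rotation_indicator :: "'a list \<Rightarrow> 'a list \<Rightarrow> 'k::zero_neq_one" where
  "rotation_indicator xs w = (if \<exists>j. w = rotate j xs then 1 else 0)"

lemma cyclic_word_fun_rotation_indicator: "cyclic_word_fun (rotation_indicator xs)"
proof -
  have "\<exists>j. v @ u = rotate j xs" if "u @ v = rotate j xs" for u v j
    using that rotate_append[of u v] by (metis rotate_rotate)
  then show ?thesis
    unfolding cyclic_word_fun_def rotation_indicator_def by metis
qed

lemma upt_double: "[0..<2 * p] = [0..<p] @ map (\<lambda>i. p + i) [0..<p]"
  using upt_add_eq_append[of 0 p p] map_add_upt[of p p] by (simp add: mult_2 add.commute)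

text \<open>A nontrivial rotation of \<open>[0..<2p]\<close> has an entry \<open>\<ge> p\<close> among its first \<open>p\<close> entries:
  the last one if the offset is below \<open>p\<close>, the first one otherwise.\<close>

lemma rotate_upt_double_eq:
  assumes p: "0 < p" and small: "\<forall>i<p. rotate j [0..<2 * p] ! i < p"
  shows "rotate j [0..<2 * p] = [0..<2 * p]"
proof -
  have nth: "rotate j [0..<2 * p] ! i = (j mod (2 * p) + i) mod (2 * p)" if "i < p" for i
    using that by (simp add: nth_rotate mod_add_left_eq)
  have "j mod (2 * p) = 0"
  proof (rule ccontr)
    assume nz: "j mod (2 * p) \<noteq> 0"
    show False
    proof (cases "j mod (2 * p) < p")
      case True
      have "(j mod (2 * p) + (p - 1)) mod (2 * p) < p"
        using small[rule_format, of "p - 1"] nth[of "p - 1"] p by simp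
      then show False
        using True nz by simp
    next
      case False
      have "(j mod (2 * p)) mod (2 * p) < p"
        using small[rule_format, of 0] nth[of 0] p by simp
      then show False
        using False by simp
    qed
  qed
  then show ?thesis
    by (metis rotate_conv_mod rotate0 length_upt diff_zero id_apply)
qed

lemma perm_words_rotation_imp_id:
  assumes \<sigma>: "\<sigma> permutes {..<p}" and \<tau>: "\<tau> permutes {..<p}" and p: "0 < p"
    and rot: "map \<sigma> [0..<p] @ map (\<lambda>i. p + \<tau> i) [0..<p] = rotate j [0..<2 * p]"
  shows "\<sigma> = id \<and> \<tau> = id"
proof -
  have "rotate j [0..<2 * p] ! i < p" if "i < p" for i
    using that permutes_in_image[OF \<sigma>, of i] arg_cong[OF rot, of "\<lambda>xs. xs ! i"]
    by (simp add: nth_append)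
  then have "map \<sigma> [0..<p] @ map (\<lambda>i. p + \<tau> i) [0..<p] = [0..<p] @ map (\<lambda>i. p + i) [0..<p]"
    using rot rotate_upt_double_eq[OF p] upt_double by metis
  then have "map \<sigma> [0..<p] = map id [0..<p] \<and> map (\<lambda>i. p + \<tau> i) [0..<p] = map (\<lambda>i. p + id i) [0..<p]"
    by (simp add: append_eq_append_conv)
  then have "\<forall>i\<in>{..<p}. \<sigma> i \<le> i" and "\<forall>i\<in>{..<p}. \<tau> i \<le> i"
    unfolding map_eq_conv by auto
  then show ?thesis
    using permutes_natset_le[OF \<sigma>] permutes_natset_le[OF \<tau>] by simp
qed

lemma word_pairing_rotation_indicator_Ssym_product:
  assumes p: "0 < p"
  shows "word_pairing (rotation_indicator [0..<2 * p])
    (fmul (Ssym p fvar) (Ssym p (\<lambda>i. fvar (p + i)))) = (1::'k::field)"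
proof -
  let ?D = "{\<sigma>. \<sigma> permutes {..<p}}"
  let ?w = "\<lambda>\<sigma> \<tau>. map \<sigma> [0..<p] @ map (\<lambda>i. p + \<tau> i) [0..<p]"
  have finD: "finite ?D"
    by (simp add: finite_permutations)
  have "fmul (Ssym p fvar) (Ssym p (\<lambda>i. fvar (p + i)))
      = (\<Sum>\<sigma>\<in>?D. \<Sum>\<tau>\<in>?D. Poly_Mapping.single (?w \<sigma> \<tau>) (1::'k))"
    unfolding Ssym_fvar Ssym_fvar_shift
    by (simp add: fmul_sum_left fmul_sum_right fmul_single finD) (rule sum.swap)
  moreover have "rotation_indicator [0..<2 * p] (?w \<sigma> \<tau>) = (if \<sigma> = id \<and> \<tau> = id then 1 else (0::'k))"
    if "\<sigma> \<in> ?D" "\<tau> \<in> ?D" for \<sigma> \<tau>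
  proof (cases "\<sigma> = id \<and> \<tau> = id")
    case True
    have "\<exists>j. ?w \<sigma> \<tau> = rotate j [0..<2 * p]"
      by (rule exI[of _ 0]) (simp add: True upt_double)
    then show ?thesis
      using True by (simp add: rotation_indicator_def)
  next
    case False
    then show ?thesis
      using that perm_words_rotation_imp_id[OF _ _ p] by (auto simp: rotation_indicator_def)
  qed
  ultimately have "word_pairing (rotation_indicator [0..<2 * p])
      (fmul (Ssym p fvar) (Ssym p (\<lambda>i. fvar (p + i))))
      = (\<Sum>\<sigma>\<in>?D. \<Sum>\<tau>\<in>?D. if \<sigma> = id \<and> \<tau> = id then 1 else (0::'k))"
    by (simp add: word_pairing_sum finD)
  also have "\<dots> = (\<Sum>\<sigma>\<in>?D. if \<sigma> = id then 1 else (0::'k))"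
    by (intro sum.cong refl) (simp add: finD permutes_id sum.delta')
  also have "\<dots> = 1"
    by (simp add: finD permutes_id sum.delta')
  finally show ?thesis .
qed

lemma fmul_Ssym_in_R2:
  "fmul (Ssym d fvar) (Ssym d (\<lambda>i. fvar (d + i))) \<in> (R2 d :: 'k::field fa set)"
proof -
  have "Ssym d fvar \<in> (R1 d :: 'k fa set)"
    unfolding R1_def by (rule subsetD[OF subset_Tspan]) simp
  moreover have "\<forall>i<d. fvar (d + i) \<in> (FA :: 'k fa set)"
    by (simp add: fvar_def FA_single)
  ultimately have "fmul (Ssym d fvar) (Ssym d (\<lambda>i. fvar (d + i)))
      \<in> {fmul u (Ssym d v) | u v. u \<in> (R1 d :: 'k fa set) \<and> (\<forall>i<d. v i \<in> FA)}"
    by (intro CollectI exI[of _ "Ssym d fvar"] exI[of _ "\<lambda>i. fvar (d + i)"]) simp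
  then show ?thesis
    unfolding R2_def by (intro subsetD[OF subset_Tspan] UnI2)
qed

theorem theorem5p1:
  fixes p :: nat
  assumes "prime p" and "p > 2" and "CHAR('k::field) = p"
  shows "(R1 p :: 'k fa set) \<noteq> R2 p"
proof
  assume R1_eq_R2: "(R1 p :: 'k fa set) = R2 p"
  have p: "0 < p"
    using assms(2) by simp
  have char: "of_nat p = (0::'k)"
    using assms(3) of_nat_CHAR[where 'a = 'k] by simp
  let ?T = "fmul (Ssym p fvar) (Ssym p (\<lambda>i. fvar (p + i))) :: 'k fa"
  have "?T \<in> cyclic_kernel"
    using fmul_Ssym_in_R2 R1_subset_cyclic_kernel[OF p char] R1_eq_R2 by blast
  then have "word_pairing (rotation_indicator [0..<2 * p]) ?T = 0"
    using cyclic_word_fun_rotation_indicator unfolding cyclic_kernel_def by blast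
  then show False
    using word_pairing_rotation_indicator_Ssym_product[OF p] by (metis zero_neq_one)
qed

end
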